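(* Let $n\ge3$. Let $\mathcal M=(G,In,Out,Leak)$ be a linear compartmental model with $n-1$ compartments such that $In=Out=\{1\}$ and $Leak=\emptyset$. Let $H$ be the graph obtained from $G$ by adding a leaf edge at compartment $1$ (new compartment $n$, edges $1\to n$ with parameter $a_{n1}$ and $n\to1$ with parameter $a_{1n}$), and let $\mathcal M'=(H,In',Out',Leak')$ be a linear compartmental model with $Leak'=\emptyset$. Let $A$ and $A^*$ denote the compartmental matrices of $\mathcal M$ and $\mathcal M'$. Then: (1) $\det(\lambda I-A^* )=\lambda\det(\lambda I-A)+a_{1n}\det(\lambda I-A)+a_{n1}\lambda\det\big((\lambda I-A)^{1,1}\big)$; (2) $\det\big((\lambda I-A^* )^{1,n}\big)=(-1)^{n-1}a_{n1}\det\big((\lambda I-A)^{1,1}\big)$; (3) $\det\big((\lambda I-A^* )^{n,1}\big)=(-1)^{n-1}a_{1n}\det\big((\lambda I-A)^{1,1}\big)$.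
   Context: A linear compartmental model $\mathcal M=(G,In,Out,Leak)$ consists of a finite directed graph $G=(V_G,E_G)$ without multi-edges, compartments $V_G=\{1,\dots,m\}$, and subsets $In,Out,Leak\subseteq V_G$; edge $j\to i$ carries parameter $a_{ij}$ and each $i\in Leak$ carries $a_{0i}$. The compartmental matrix $A$ has $A_{ii}=-\sum_{k:\,i\to k\in E_G}a_{ki}$ (minus $a_{0i}$ if $i\in Leak$), $A_{ij}=a_{ij}$ if $j\to i\in E_G$, $0$ otherwise. $B^{i,j}$ denotes $B$ with row $i$ and column $j$ removed; $\lambda$ is an indeterminate. Adding a leaf edge at $i$ to a graph with vertex set $\{1,\dots,n-1\}$ gives the graph with vertex set $\{1,\dots,n\}$ and edge set $E_G\cup\{i\to n,n\to i\}$. *)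

theory Defs
  imports "Jordan_Normal_Form.Determinant"
begin

text \<open>Compartments are 1..m; edge (j,i) in E means j -> i with parameter a i j;
leak parameter of compartment i is a 0 i. Matrix entry (i,j) (0-based) corresponds
to compartments i+1, j+1.\<close>

definition lin_comp_model :: "nat \<Rightarrow> (nat \<times> nat) set \<Rightarrow> nat set \<Rightarrow> nat set \<Rightarrow> nat set \<Rightarrow> bool" where
  "lin_comp_model m E In Out Leak \<longleftrightarrow>
     E \<subseteq> {1..m} \<times> {1..m} \<and> In \<subseteq> {1..m} \<and> Out \<subseteq> {1..m} \<and> Leak \<subseteq> {1..m}"

definition comp_matrix :: "nat \<Rightarrow> (nat \<times> nat) set \<Rightarrow> nat set \<Rightarrow> (nat \<Rightarrow> nat \<Rightarrow> 'a::comm_ring_1) \<Rightarrow> 'a mat" where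
  "comp_matrix m E Leak a = mat m m (\<lambda>(i,j).
     if i = j then - (\<Sum>k\<in>{k\<in>{1..m}. (i+1, k) \<in> E}. a k (i+1))
                   - (if i+1 \<in> Leak then a 0 (i+1) else 0)
     else if (j+1, i+1) \<in> E then a (i+1) (j+1) else 0)"

definition add_leaf_edge :: "(nat \<times> nat) set \<Rightarrow> nat \<Rightarrow> nat \<Rightarrow> (nat \<times> nat) set" where
  "add_leaf_edge E i n = E \<union> {(i, n), (n, i)}"

end

theory Submission
  imports Defs
begin

text \<open>Adding the leaf n to compartment 1 changes the matrix \<open>\<lambda>I - A\<close> only by the
entry \<open>a\<^sub>n\<^sub>1\<close> added at the corner (1,1), a new last row \<open>(-a\<^sub>n\<^sub>1, 0, \<dots>, 0, \<lambda> + a\<^sub>1\<^sub>n)\<close>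
and a new last column \<open>(-a\<^sub>1\<^sub>n, 0, \<dots>, 0)\<close>. Laplace expansion along the new row (or
column) then reduces all three determinants to \<open>det (\<lambda>I - A)\<close> and its (1,1)-minor;
the corner perturbation contributes \<open>a\<^sub>n\<^sub>1\<close> times that minor, by linearity of the
determinant in the first row. Only \<open>n - 1 \<ge> 1\<close> and \<open>E \<subseteq> {1..n-1}\<^sup>2\<close> are used:
inputs and outputs do not enter the matrices.\<close>

lemma det_add_to_entry:
  fixes L :: "'a::comm_ring_1 mat"
  assumes L: "L \<in> carrier_mat m m" and i: "i < m" and j: "j < m"
  shows "det (mat m m (\<lambda>(r,c). L$$(r,c) + (if r = i \<and> c = j then p else 0)))
        = det L + p * cofactor L i j"
proof -
  define L' where "L' = mat m m (\<lambda>(r,c). L$$(r,c) + (if r = i \<and> c = j then p else 0))"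
  have L': "L' \<in> carrier_mat m m" unfolding L'_def by auto
  have same_minors: "mat_delete L' i c = mat_delete L i c" for c
    by (rule eq_matI) (use L in \<open>auto simp: mat_delete_def L'_def\<close>)
  have "det L' = (\<Sum>c<m. L'$$(i,c) * cofactor L' i c)"
    by (rule laplace_expansion_row[OF L' i])
  also have "\<dots> = (\<Sum>c<m. L$$(i,c) * cofactor L i c + (if c = j then p * cofactor L i j else 0))"
    unfolding cofactor_def same_minors using i
    by (intro sum.cong) (auto simp: L'_def algebra_simps)
  also have "\<dots> = det L + p * cofactor L i j"
    using j by (simp add: sum.distrib laplace_expansion_row[OF L i, symmetric])
  finally show ?thesis unfolding L'_def .
qed

lemma index_mat_delete:
  "i < dim_row A - 1 \<Longrightarrow> j < dim_col A - 1 \<Longrightarrow>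
   mat_delete A r c $$ (i,j) = A $$ (if i < r then i else Suc i, if j < c then j else Suc j)"
  by (simp add: mat_delete_def)

text \<open>For \<open>L = \<lambda>I - A\<close>, \<open>p = a\<^sub>n\<^sub>1\<close> and \<open>q = a\<^sub>1\<^sub>n\<close> this is \<open>\<lambda>I - A\<^sup>*\<close>.\<close>

definition leaf_extension :: "'a::comm_ring_1 mat \<Rightarrow> 'a \<Rightarrow> 'a \<Rightarrow> 'a \<Rightarrow> 'a mat" where
  "leaf_extension L p q lam = mat (Suc (dim_row L)) (Suc (dim_row L)) (\<lambda>(i,j).
     if i < dim_row L \<and> j < dim_row L then L$$(i,j) + (if i = 0 \<and> j = 0 then p else 0)
     else if i = dim_row L \<and> j = dim_row L then lam + q
     else if i = dim_row L then (if j = 0 then - p else 0)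
     else if i = 0 then - q else 0)"

lemma dim_leaf_extension:
  assumes "L \<in> carrier_mat m m"
  shows "dim_row (leaf_extension L p q lam) = Suc m" "dim_col (leaf_extension L p q lam) = Suc m"
  using assms by (simp_all add: leaf_extension_def)

lemma leaf_extension_carrier:
  assumes "L \<in> carrier_mat m m"
  shows "leaf_extension L p q lam \<in> carrier_mat (Suc m) (Suc m)"
  by (intro carrier_matI dim_leaf_extension[OF assms])

lemma index_leaf_extension:
  assumes "L \<in> carrier_mat m m" and "i < Suc m" and "j < Suc m"
  shows "leaf_extension L p q lam $$ (i,j) =
     (if i < m \<and> j < m then L$$(i,j) + (if i = 0 \<and> j = 0 then p else 0)
      else if i = m \<and> j = m then lam + q
      else if i = m then (if j = 0 then - p else 0)
      else if i = 0 then - q else 0)"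
  using assms by (simp add: leaf_extension_def)

context
  fixes L :: "'a::comm_ring_1 mat" and m :: nat and p q lam :: 'a
  assumes L: "L \<in> carrier_mat m m" and m: "0 < m"
begin

private lemma minus_power_pred: "- ((-1::'a)^(m - 1)) = (-1)^m"
  using m by (cases m) simp_all

lemma det_leaf_extension_minor_0_last:
  "det (mat_delete (leaf_extension L p q lam) 0 m) = (-1)^m * p * det (mat_delete L 0 0)"
proof -
  define N where "N = mat_delete (leaf_extension L p q lam) 0 m"
  have N: "N \<in> carrier_mat m m"
    using mat_delete_carrier[OF leaf_extension_carrier[OF L]] by (simp add: N_def)
  have minor: "mat_delete N (m - 1) 0 = mat_delete L 0 0"
    by (rule eq_matI)
      (use L m in \<open>auto simp: N_def index_mat_delete dim_leaf_extension[OF L] index_leaf_extension[OF L]\<close>)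
  have "det N = (\<Sum>j<m. N$$(m - 1,j) * cofactor N (m - 1) j)"
    using m by (intro laplace_expansion_row[OF N]) simp
  also have "\<dots> = (\<Sum>j<m. if j = 0 then - p * cofactor N (m - 1) 0 else 0)"
    using m by (intro sum.cong)
      (auto simp: N_def index_mat_delete dim_leaf_extension[OF L] index_leaf_extension[OF L])
  also have "\<dots> = - p * cofactor N (m - 1) 0"
    using m by simp
  also have "\<dots> = (-1)^m * p * det (mat_delete L 0 0)"
    unfolding cofactor_def minor by (simp flip: minus_power_pred)
  finally show ?thesis unfolding N_def .
qed

lemma det_leaf_extension_minor_last_0:
  "det (mat_delete (leaf_extension L p q lam) m 0) = (-1)^m * q * det (mat_delete L 0 0)"
proof -
  define M where "M = mat_delete (leaf_extension L p q lam) m 0"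
  have M: "M \<in> carrier_mat m m"
    using mat_delete_carrier[OF leaf_extension_carrier[OF L]] by (simp add: M_def)
  have minor: "mat_delete M 0 (m - 1) = mat_delete L 0 0"
    by (rule eq_matI)
      (use L m in \<open>auto simp: M_def index_mat_delete dim_leaf_extension[OF L] index_leaf_extension[OF L]\<close>)
  have "det M = (\<Sum>i<m. M$$(i,m - 1) * cofactor M i (m - 1))"
    using m by (intro laplace_expansion_column[OF M]) simp
  also have "\<dots> = (\<Sum>i<m. if i = 0 then - q * cofactor M 0 (m - 1) else 0)"
    using m by (intro sum.cong)
      (auto simp: M_def index_mat_delete dim_leaf_extension[OF L] index_leaf_extension[OF L])
  also have "\<dots> = - q * cofactor M 0 (m - 1)"
    using m by simp
  also have "\<dots> = (-1)^m * q * det (mat_delete L 0 0)"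
    unfolding cofactor_def minor by (simp flip: minus_power_pred)
  finally show ?thesis unfolding M_def .
qed

lemma det_leaf_extension:
  "det (leaf_extension L p q lam) = lam * det L + q * det L + p * lam * det (mat_delete L 0 0)"
proof -
  let ?D = "det (mat_delete L 0 0)"
  define Ls where "Ls = leaf_extension L p q lam"
  have Ls: "Ls \<in> carrier_mat (Suc m) (Suc m)"
    unfolding Ls_def by (rule leaf_extension_carrier[OF L])
  have corner:
    "mat_delete Ls m m = mat m m (\<lambda>(i,j). L$$(i,j) + (if i = 0 \<and> j = 0 then p else 0))"
    by (rule eq_matI)
      (use L in \<open>auto simp: Ls_def index_mat_delete dim_leaf_extension[OF L] index_leaf_extension[OF L]\<close>)
  have "(\<Sum>j<m. Ls $$ (m,j) * cofactor Ls m j)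
      = (\<Sum>j<m. if j = 0 then - p * cofactor Ls m 0 else 0)"
    by (intro sum.cong) (auto simp: Ls_def index_leaf_extension[OF L])
  also have "\<dots> = - p * ((-1)^m * ((-1)^m * q * ?D))"
    using m by (simp add: Ls_def cofactor_def det_leaf_extension_minor_last_0)
  also have "\<dots> = - p * q * ?D"
    by (simp add: mult.assoc)
  finally have last_row: "(\<Sum>j<m. Ls $$ (m,j) * cofactor Ls m j) = - p * q * ?D" .
  have "det Ls = (\<Sum>j<Suc m. Ls $$ (m,j) * cofactor Ls m j)"
    by (intro laplace_expansion_row[OF Ls]) simp
  also have "\<dots> = - p * q * ?D + (lam + q) * det (mat_delete Ls m m)"
    by (simp only: sum.lessThan_Suc last_row)
      (simp add: Ls_def index_leaf_extension[OF L] cofactor_def power_add)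
  also have "\<dots> = - p * q * ?D + (lam + q) * (det L + p * ?D)"
    by (simp add: corner det_add_to_entry[OF L m m] cofactor_def)
  also have "\<dots> = lam * det L + q * det L + p * lam * ?D"
    by (simp add: algebra_simps)
  finally show ?thesis unfolding Ls_def .
qed

end

lemma char_matrix_carrier: "lam \<cdot>\<^sub>m 1\<^sub>m m - comp_matrix m E Leak a \<in> carrier_mat m m"
  unfolding comp_matrix_def by (rule minus_carrier_mat) simp

lemma index_char_matrix:
  assumes "i < m" and "j < m"
  shows "(lam \<cdot>\<^sub>m 1\<^sub>m m - comp_matrix m E {} a) $$ (i,j) =
    (if i = j then lam + (\<Sum>k\<in>{k\<in>{1..m}. (i+1, k) \<in> E}. a k (i+1))
     else if (j+1, i+1) \<in> E then - a (i+1) (j+1) else 0)"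
  using assms by (simp add: comp_matrix_def)

lemma out_edges_add_leaf_edge_root:
  assumes "E \<subseteq> {1..m} \<times> {1..m}"
  shows "{k\<in>{1..Suc m}. (1, k) \<in> add_leaf_edge E 1 (Suc m)}
       = insert (Suc m) {k\<in>{1..m}. (1, k) \<in> E}"
  using assms by (auto simp: add_leaf_edge_def le_Suc_eq)

lemma out_edges_add_leaf_edge_other:
  assumes "E \<subseteq> {1..m} \<times> {1..m}" and "0 < i" and "i < m"
  shows "{k\<in>{1..Suc m}. (i+1, k) \<in> add_leaf_edge E 1 (Suc m)}
       = {k\<in>{1..m}. (i+1, k) \<in> E}"
  using assms by (auto simp: add_leaf_edge_def le_Suc_eq)

lemma out_edges_add_leaf_edge_leaf:
  assumes "E \<subseteq> {1..m} \<times> {1..m}"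
  shows "{k\<in>{1..Suc m}. (Suc m, k) \<in> add_leaf_edge E 1 (Suc m)} = {1}"
  using assms by (auto simp: add_leaf_edge_def)

lemma char_matrix_add_leaf_edge:
  fixes a :: "nat \<Rightarrow> nat \<Rightarrow> 'a::comm_ring_1"
  assumes E: "E \<subseteq> {1..m} \<times> {1..m}" and m: "0 < m"
  shows "lam \<cdot>\<^sub>m 1\<^sub>m (Suc m) - comp_matrix (Suc m) (add_leaf_edge E 1 (Suc m)) {} a
       = leaf_extension (lam \<cdot>\<^sub>m 1\<^sub>m m - comp_matrix m E {} a) (a (Suc m) 1) (a 1 (Suc m)) lam"
  (is "?Ls = ?Ext")
proof (rule eq_matI)
  note L = char_matrix_carrier[of lam m E "{}" a]
  fix i j assume "i < dim_row ?Ext" and "j < dim_col ?Ext"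
  then have i: "i < Suc m" and j: "j < Suc m" by (simp_all add: dim_leaf_extension[OF L])
  consider (root) "i = 0" "j = 0" | (inner_diag) "0 < i" "i < m" "i = j" | (leaf) "i = m" "j = m"
    | (inner) "i < m" "j < m" "i \<noteq> j" | (leaf_row) "i = m" "j < m" | (leaf_col) "i < m" "j = m"
    using i j by linarith
  then show "?Ls $$ (i, j) = ?Ext $$ (i, j)"
  proof cases
    case root
    then show ?thesis using m out_edges_add_leaf_edge_root[OF E]
      by (simp add: index_char_matrix index_leaf_extension[OF L] algebra_simps)
  next
    case inner_diag
    then show ?thesis using out_edges_add_leaf_edge_other[OF E \<open>0 < i\<close> \<open>i < m\<close>]
      by (simp add: index_char_matrix index_leaf_extension[OF L])
  next
    case leaf
    then show ?thesis using out_edges_add_leaf_edge_leaf[OF E]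
      by (simp add: index_char_matrix index_leaf_extension[OF L])
  next
    case inner
    then show ?thesis
      by (auto simp: index_char_matrix index_leaf_extension[OF L] add_leaf_edge_def)
  next
    case leaf_row
    then show ?thesis
      using E by (auto simp: index_char_matrix index_leaf_extension[OF L] add_leaf_edge_def)
  next
    case leaf_col
    then show ?thesis
      using E by (auto simp: index_char_matrix index_leaf_extension[OF L] add_leaf_edge_def)
  qed
qed (simp_all only: dim_leaf_extension[OF char_matrix_carrier], simp_all add: comp_matrix_def)

theorem lemma4p13:
  fixes n :: nat and E :: "(nat \<times> nat) set" and In' Out' :: "nat set"
    and a :: "nat \<Rightarrow> nat \<Rightarrow> 'a::comm_ring_1" and lam :: 'a
  assumes "n \<ge> 3"
    and "lin_comp_model (n-1) E {1} {1} {}"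
    and "lin_comp_model n (add_leaf_edge E 1 n) In' Out' {}"
  defines "L \<equiv> lam \<cdot>\<^sub>m 1\<^sub>m (n-1) - comp_matrix (n-1) E {} a"
    and "Ls \<equiv> lam \<cdot>\<^sub>m 1\<^sub>m n - comp_matrix n (add_leaf_edge E 1 n) {} a"
  shows "det Ls = lam * det L + a 1 n * det L + a n 1 * lam * det (mat_delete L 0 0) \<and>
         det (mat_delete Ls 0 (n-1)) = (-1)^(n-1) * a n 1 * det (mat_delete L 0 0) \<and>
         det (mat_delete Ls (n-1) 0) = (-1)^(n-1) * a 1 n * det (mat_delete L 0 0)"
proof -
  define m where "m = n - 1"
  have n: "n = Suc m" and m: "0 < m" using assms(1) by (auto simp: m_def)
  have "E \<subseteq> {1..m} \<times> {1..m}" using assms(2) by (simp add: lin_comp_model_def m_def)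
  then have Ls: "Ls = leaf_extension L (a n 1) (a 1 n) lam"
    unfolding Ls_def L_def n diff_Suc_1 using m by (rule char_matrix_add_leaf_edge)
  have L: "L \<in> carrier_mat m m"
    unfolding L_def m_def by (rule char_matrix_carrier)
  show ?thesis
    using det_leaf_extension[OF L m] det_leaf_extension_minor_0_last[OF L m]
      det_leaf_extension_minor_last_0[OF L m]
    by (simp add: Ls n)
qed

end
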